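(* For a large discrete power-law random network with $N$ nodes, exponent $\alpha$ and maximal degree $K$, the fraction of links removed at the threshold $p_c$ for random node failures is $$m(p_c) = 1 - \left(\frac{H_K^{(\alpha-1)}}{H_K^{(\alpha-2)} - H_K^{(\alpha-1)}}\right)^2,\qquad\text{where } H_K^{(s)} = \sum_{k=1}^{K} k^{-s}.$$
   Context: A random network with degree distribution $p_k$ is a configuration model: each of the $N$ nodes receives a degree drawn from $p_k$, giving that many stubs, and stubs are paired uniformly at random. A discrete power-law network with exponent $\alpha$ has $p_k\propto k^{-\alpha}$ for integers $k\ge1$; a network with $N$ nodes has finite maximal degree $K$ (a cutoff depending on $N$), and moments are computed over $1\le k\le K$. Random node failures remove a uniformly random fraction $p$ of the nodes with their incident links; $m(p)$ is the resulting fraction of removed links ($m(p)=2p-p^2$ in the large-network limit). The threshold $p_c$ is the fraction of removed nodes at which the giant component disappears; the paper uses the known formula $p_c = 1-\langle k\rangle/(\langle k^2\rangle-\langle k\rangle)$. *)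

theory Defs
  imports Complex_Main
begin

definition gen_harmonic :: "nat \<Rightarrow> real \<Rightarrow> real" where
  "gen_harmonic K s = (\<Sum>k=1..K. real k powr (- s))"

definition powerlaw_pk :: "real \<Rightarrow> nat \<Rightarrow> nat \<Rightarrow> real" where
  "powerlaw_pk alpha K k = real k powr (- alpha) / gen_harmonic K alpha"

definition powerlaw_moment :: "real \<Rightarrow> nat \<Rightarrow> nat \<Rightarrow> real" where
  "powerlaw_moment alpha K j = (\<Sum>k=1..K. real k ^ j * powerlaw_pk alpha K k)"

definition threshold_pc :: "real \<Rightarrow> nat \<Rightarrow> real" where
  "threshold_pc alpha K =
     1 - powerlaw_moment alpha K 1 / (powerlaw_moment alpha K 2 - powerlaw_moment alpha K 1)"

text \<open>Fraction of removed links under random node removal of fraction p (large-network limit).\<close>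
definition removed_links :: "real \<Rightarrow> real" where
  "removed_links p = 2 * p - p ^ 2"

end

theory Submission
  imports Defs
begin

text \<open>The j-th moment of the power law is H_K^(alpha-j) / H_K^(alpha), so p_c = 1 - r with
  r = H_K^(alpha-1) / (H_K^(alpha-2) - H_K^(alpha-1)); and m(p) = 2p - p^2 = 1 - (1 - p)^2
  then gives m(p_c) = 1 - r^2.\<close>

lemma gen_harmonic_pos: "K \<ge> 1 \<Longrightarrow> gen_harmonic K s > 0"
  unfolding gen_harmonic_def by (rule sum_pos) auto

lemma powerlaw_moment_eq_gen_harmonic:
  "powerlaw_moment alpha K j = gen_harmonic K (alpha - real j) / gen_harmonic K alpha"
proof -
  have "real k ^ j * powerlaw_pk alpha K k = real k powr (- (alpha - real j)) / gen_harmonic K alpha"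
    if "k \<in> {1..K}" for k
  proof -
    from that have "real k > 0" by auto
    then have "real k ^ j * real k powr (- alpha) = real k powr (- (alpha - real j))"
      by (simp add: powr_realpow[symmetric] powr_add[symmetric])
    then show ?thesis
      unfolding powerlaw_pk_def by (metis times_divide_eq_right)
  qed
  then show ?thesis
    unfolding powerlaw_moment_def gen_harmonic_def
    by (simp add: sum_divide_distrib)
qed

lemma threshold_pc_eq_gen_harmonic:
  assumes "K \<ge> 1"
  shows "threshold_pc alpha K =
    1 - gen_harmonic K (alpha - 1) / (gen_harmonic K (alpha - 2) - gen_harmonic K (alpha - 1))"
proof -
  have "gen_harmonic K alpha \<noteq> 0"
    using gen_harmonic_pos[OF assms, of alpha] by simp
  then show ?thesis
    unfolding threshold_pc_def powerlaw_moment_eq_gen_harmonic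
    by (simp add: diff_divide_distrib[symmetric])
qed

lemma removed_links_one_minus: "removed_links (1 - r) = 1 - r ^ 2"
  unfolding removed_links_def by (simp add: power2_eq_square algebra_simps)

theorem mainTheorem8:
  fixes alpha :: real and K :: nat
  assumes "K \<ge> 1"
  shows "removed_links (threshold_pc alpha K) =
    1 - (gen_harmonic K (alpha - 1) / (gen_harmonic K (alpha - 2) - gen_harmonic K (alpha - 1))) ^ 2"
  unfolding threshold_pc_eq_gen_harmonic[OF assms] removed_links_one_minus ..

end
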